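(* Assume $\nu$ satisfies Assumption (A) and $\mathcal M$ satisfies Assumption (B). Let $n\ge2$, assume $M_n$ is a $\overline Z^{1:(n-1)}$-measurable positive integer random variable, and let $\mathcal M^{n-1}:=\mathcal M\cup\{\overline g_1,\dots,\overline g_{n-1}\}$. Then for all $\epsilon>0$, almost surely, $$\mathbb{P}\Big[\sup_{g,h\in\mathcal M^{n-1}}\Big|\mathrm{Cov}\big[g(Z),h(Z)\mid\overline Z^{1:\infty}\big]-\mathrm{Cov}_{\overline Z^n}(g,h)\Big|\ge\epsilon\ \Big|\ \overline Z^{1:(n-1)}\Big]\le C\exp\!\Big(-cM_n\,\phi\Big(\frac{\epsilon}{6K_\infty^{n-1}K_{\mathcal L}^{n-1}}\Big)\Big),$$ where $K_\infty^{n-1}=\max(K_\infty,\|\overline g_1\|_{L^\infty},\dots,\|\overline g_{n-1}\|_{L^\infty})$ and $K_{\mathcal L}^{n-1}=\max(K_{\mathcal L},\|\overline g_1\|_{\mathcal L},\dots,\|\overline g_{n-1}\|_{\mathcal L})$.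
   Context: $Z$ is an $\mathbb{R}^d$-valued random vector with law $\nu$; $L^2_{\nu,0}(\mathbb{R}^d)=\{g\in L^2_\nu:\int g\,d\nu=0\}$, $\|g\|=\sqrt{\mathrm{Var}[g(Z)]}$. $\mathcal P\subset\mathbb{R}^p$; $f_\mu$ continuous, in $L^2_\nu$; $g_\mu=f_\mu-\mathbb{E}[f_\mu(Z)]$; $\mathcal M=\{g_\mu:\mu\in\mathcal P\}$; $d_n(\mathcal M)=\inf_{V_n}\sup_\mu\inf_{h\in V_n}\|g_\mu-h\|$ over $n$-dimensional subspaces. $\mathcal L$: Lipschitz functions, $\|f\|_{\mathcal L}$ Lipschitz constant. For $\overline Z=(Z_k)_{k\le M}$: $\mathbb{E}_{\overline Z}(f)=\frac1M\sum_kf(Z_k)$, $\mathrm{Cov}_{\overline Z}(f,g)=\mathbb{E}_{\overline Z}(fg)-\mathbb{E}_{\overline Z}(f)\mathbb{E}_{\overline Z}(g)$, $\mathrm{Var}_{\overline Z}(f)=\mathrm{Cov}_{\overline Z}(f,f)$. $\overline Z^n=(Z^n_k)_{1\le k\le M_n}$, all $Z^n_k$ i.i.d. with law $\nu$, independent of $Z$; $\overline Z^{1:n}=(\overline Z^m)_{m\le n}$, $\overline Z^{1:\infty}=(\overline Z^n)_n$. MC-greedy algorithm: $\overline\mu_1\in\operatorname{argmax}_\mu\mathrm{Var}_{\overline Z^1}(g_\mu)$ with $g_{\overline\mu_1}\ne0$; for $m\ge2$, $\overline\mu_m\in\operatorname{argmax}_\mu\inf_{\lambda\in\mathbb{R}^{m-1}}\mathrm{Var}_{\overline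 Z^m}(g_\mu-\sum_{i<m}\lambda_ig_{\overline\mu_i})$ with $g_{\overline\mu_m}\notin\mathrm{Span}\{g_{\overline\mu_i}\}_{i<m}$. $(\overline g_m)$ is the Gram–Schmidt orthonormalization of $(g_{\overline\mu_m})$ for $(u,v)\mapsto\mathrm{Cov}[u(Z),v(Z)\mid\overline Z^{1:\infty}]$; $\overline g_m$ is $\overline Z^{1:m}$-measurable. Assumption (A): $\exists\alpha>1,\beta>0$, $\int_{\mathbb{R}^d}e^{\beta|x|^\alpha}d\nu<\infty$. $\phi(\kappa)=\kappa^2\mathbf 1_{\kappa\le1}+\kappa^\alpha\mathbf 1_{\kappa>1}$ ($d=1$), $(\kappa/\log(2+1/\kappa))^2\mathbf 1_{\kappa\le1}+\kappa^\alpha\mathbf 1_{\kappa>1}$ ($d=2$), $\kappa^d\mathbf 1_{\kappa\le1}+\kappa^\alpha\mathbf 1_{\kappa>1}$ ($d\ge3$). $c,C>0$ are constants (existing under (A) by Fournier–Guillin) such that for all $M$, all i.i.d. $\overline Z=(Z_k)_{k\le M}$ of law $\nu$, all $\kappa>0$: $\mathbb{P}[\sup_{\|f\|_{\mathcal L}\le1}|\mathbb{E}[f(Z)]-\mathbb{E}_{\overline Z}(f)|\ge\kappa]\le Ce^{-cM\phi(\kappa)}$. Assumption (B): (B1) $\mathcal M$ compact in $L^2_{\nu,0}$, $K_2=\sup_\mu\|g_\mu\|<\infty$; (B2) $\mathcal M\subset\mathcal L$, $K_{\mathcal L}=\sup_\mu\|g_\mu\|_{\mathcal L}<\infty$; (B3)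 $\mathcal M\subset L^\infty$, $K_\infty=\sup_\mu\|g_\mu\|_{L^\infty}<\infty$; (B4) $d_n(\mathcal M)>0$ for all $n$. *)

theory Defs
  imports "HOL-Probability.Probability"
begin

definition cov_nu :: "'x measure \<Rightarrow> ('x \<Rightarrow> real) \<Rightarrow> ('x \<Rightarrow> real) \<Rightarrow> real" where
  "cov_nu \<nu> u v = (\<integral>x. u x * v x \<partial>\<nu>) - (\<integral>x. u x \<partial>\<nu>) * (\<integral>x. v x \<partial>\<nu>)"

definition l2norm :: "'x measure \<Rightarrow> ('x \<Rightarrow> real) \<Rightarrow> real" where
  "l2norm \<nu> u = sqrt (cov_nu \<nu> u u)"

definition L2_0 :: "'x measure \<Rightarrow> ('x \<Rightarrow> real) set" where
  "L2_0 \<nu> = {u. u \<in> borel_measurable \<nu> \<and> integrable \<nu> (\<lambda>x. (u x)\<^sup>2) \<and> (\<integral>x. u x \<partial>\<nu>) = 0}"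

definition emp_mean :: "(nat \<Rightarrow> 'x) \<Rightarrow> nat \<Rightarrow> ('x \<Rightarrow> real) \<Rightarrow> real" where
  "emp_mean zs M u = (\<Sum>k<M. u (zs k)) / real M"

definition emp_cov :: "(nat \<Rightarrow> 'x) \<Rightarrow> nat \<Rightarrow> ('x \<Rightarrow> real) \<Rightarrow> ('x \<Rightarrow> real) \<Rightarrow> real" where
  "emp_cov zs M u v = emp_mean zs M (\<lambda>x. u x * v x) - emp_mean zs M u * emp_mean zs M v"

definition lipconst :: "('x::metric_space \<Rightarrow> real) \<Rightarrow> real" where
  "lipconst u = Inf {L. L-lipschitz_on UNIV u}"

definition supnorm :: "('x \<Rightarrow> real) \<Rightarrow> real" where
  "supnorm u = (SUP x. \<bar>u x\<bar>)"

definition gmu :: "'x measure \<Rightarrow> ('p \<Rightarrow> 'x \<Rightarrow> real) \<Rightarrow> 'p \<Rightarrow> 'x \<Rightarrow> real" where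
  "gmu \<nu> f \<mu> = (\<lambda>x. f \<mu> x - (\<integral>y. f \<mu> y \<partial>\<nu>))"

definition l2_compact :: "'x measure \<Rightarrow> ('x \<Rightarrow> real) set \<Rightarrow> bool" where
  "l2_compact \<nu> S \<longleftrightarrow> S \<subseteq> L2_0 \<nu> \<and>
     (\<forall>s :: nat \<Rightarrow> 'x \<Rightarrow> real. (\<forall>k. s k \<in> S) \<longrightarrow>
        (\<exists>l\<in>S. \<exists>r :: nat \<Rightarrow> nat. strict_mono r \<and> (\<lambda>k. l2norm \<nu> (\<lambda>x. s (r k) x - l x)) \<longlonglongrightarrow> 0))"

definition kolmogorov_width :: "'x measure \<Rightarrow> ('x \<Rightarrow> real) set \<Rightarrow> nat \<Rightarrow> real" where
  "kolmogorov_width \<nu> S n =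
     (INF b \<in> {b :: nat \<Rightarrow> 'x \<Rightarrow> real. \<forall>i<n. b i \<in> L2_0 \<nu>}.
        SUP u \<in> S. INF lam \<in> (UNIV :: (nat \<Rightarrow> real) set).
          l2norm \<nu> (\<lambda>x. u x - (\<Sum>i<n. lam i * b i x)))"

text \<open>The rate function phi (d = dimension, alpha from Assumption (A)).\<close>
definition phi :: "nat \<Rightarrow> real \<Rightarrow> real \<Rightarrow> real" where
  "phi d \<alpha> \<kappa> =
    (if \<kappa> > 1 then \<kappa> powr \<alpha>
     else if d = 1 then \<kappa>\<^sup>2
     else if d = 2 then (\<kappa> / ln (2 + 1 / \<kappa>))\<^sup>2
     else \<kappa> ^ d)"

primrec gs_list :: "(('x \<Rightarrow> real) \<Rightarrow> ('x \<Rightarrow> real) \<Rightarrow> real) \<Rightarrow> (nat \<Rightarrow> 'x \<Rightarrow> real) \<Rightarrow> nat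
    \<Rightarrow> ('x \<Rightarrow> real) list" where
  "gs_list ip f 0 = []"
| "gs_list ip f (Suc m) =
     (let L = gs_list ip f m;
          w = (\<lambda>x. f m x - sum_list (map (\<lambda>v. ip (f m) v * v x) L))
      in L @ [(\<lambda>x. w x / sqrt (ip w w))])"

text \<open>m-th Gram--Schmidt vector (m >= 1) of the sequence f 1, f 2, ...\<close>
definition gram_schmidt :: "(('x \<Rightarrow> real) \<Rightarrow> ('x \<Rightarrow> real) \<Rightarrow> real) \<Rightarrow> (nat \<Rightarrow> 'x \<Rightarrow> real) \<Rightarrow> nat
    \<Rightarrow> 'x \<Rightarrow> real" where
  "gram_schmidt ip f m = gs_list ip (\<lambda>i. f (Suc i)) m ! (m - 1)"

text \<open>sigma-algebra generated by the batches 1..m (each batch is the whole i.i.d. sequence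
  Zs i 0, Zs i 1, ...; the batch actually used is its first M i entries).\<close>
definition batch_sigma :: "'w measure \<Rightarrow> (nat \<Rightarrow> nat \<Rightarrow> 'w \<Rightarrow> 'x::topological_space) \<Rightarrow> nat \<Rightarrow> 'w measure" where
  "batch_sigma P Zs m = sigma (space P)
     {Zs i k -` A \<inter> space P | i k A. 1 \<le> i \<and> i \<le> m \<and> A \<in> sets borel}"

text \<open>The objective of the MC-greedy step m with sample batch zs of size Mm, given the
  previously selected parameters mus 1, ..., mus (m-1).\<close>
definition greedy_obj :: "'x measure \<Rightarrow> ('p \<Rightarrow> 'x \<Rightarrow> real) \<Rightarrow> (nat \<Rightarrow> 'x) \<Rightarrow> nat \<Rightarrow> (nat \<Rightarrow> 'p)
    \<Rightarrow> nat \<Rightarrow> 'p \<Rightarrow> real" where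
  "greedy_obj \<nu> f zs Mm mus m \<mu> =
     (INF lam \<in> (UNIV :: (nat \<Rightarrow> real) set).
        (let h = (\<lambda>x. gmu \<nu> f \<mu> x - (\<Sum>i\<in>{1..<m}. lam i * gmu \<nu> f (mus i) x)) in emp_cov zs Mm h h))"

end

theory Submission
  imports Defs
begin

text \<open>
  If \<open>|g|, |h| \<le> a\<close> and \<open>g, h\<close> are \<open>b\<close>-Lipschitz, then \<open>gh\<close> is \<open>2ab\<close>-Lipschitz and the
  difference between the covariance of \<open>g, h\<close> under \<open>\<nu>\<close> and their empirical covariance splits into
  three mean deviations, so it is at most \<open>4ab W\<close>, where \<open>W\<close> is the Wasserstein-1 distance between
  \<open>\<nu>\<close> and the empirical measure of the sample. All functions of \<open>\<M>\<close> and all \<open>g\<^sub>i\<close>, \<open>i < n\<close>,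
  satisfy this with \<open>a = K\<^sub>\<infinity>\<close> and \<open>b = K\<^sub>L\<close>, which are determined by the first \<open>n - 1\<close>
  batches, whereas the \<open>n\<close>-th batch is independent of them and is an i.i.d. sample of \<open>\<nu>\<close> of size \<open>M\<^sub>n\<close>. Conditionally
  on the past, the deviation event is therefore contained in \<open>{W \<ge> \<epsilon> / (4ab)}\<close>, whose
  probability is bounded by the Fournier--Guillin inequality. The sample size \<open>M\<^sub>n\<close> and the
  threshold are random; this is handled by splitting according to the value of \<open>M\<^sub>n\<close> and a
  rational number between \<open>\<epsilon> / (6ab)\<close> and \<open>\<epsilon> / (4ab)\<close>, using that \<open>\<phi>\<close> is monotone.
\<close>

section \<open>Bounded Lipschitz functions\<close>

definition bounded_lipschitz :: "('x::metric_space \<Rightarrow> real) \<Rightarrow> bool" where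
  "bounded_lipschitz u \<longleftrightarrow> bdd_above (range (\<lambda>x. \<bar>u x\<bar>)) \<and> (\<exists>L. L-lipschitz_on UNIV u)"

lemma bounded_lipschitz_const: "bounded_lipschitz (\<lambda>x. c)"
  unfolding bounded_lipschitz_def using lipschitz_on_constant by auto

lemma bounded_lipschitz_add:
  assumes "bounded_lipschitz u" "bounded_lipschitz v"
  shows "bounded_lipschitz (\<lambda>x. u x + v x)"
proof -
  obtain a b where "\<And>x. \<bar>u x\<bar> \<le> a" "\<And>x. \<bar>v x\<bar> \<le> b"
    using assms unfolding bounded_lipschitz_def bdd_above_def by blast
  then have "\<bar>u x + v x\<bar> \<le> a + b" for x
    by (meson abs_triangle_ineq add_mono order_trans)
  moreover obtain L1 L2 where "L1-lipschitz_on UNIV u" "L2-lipschitz_on UNIV v"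
    using assms unfolding bounded_lipschitz_def by blast
  then have "(L1 + L2)-lipschitz_on UNIV (\<lambda>x. u x + v x)" by (rule lipschitz_on_add)
  ultimately show ?thesis unfolding bounded_lipschitz_def bdd_above_def by blast
qed

lemma bounded_lipschitz_cmult:
  assumes "bounded_lipschitz u"
  shows "bounded_lipschitz (\<lambda>x. c * u x)"
proof -
  obtain a where "\<And>x. \<bar>u x\<bar> \<le> a"
    using assms unfolding bounded_lipschitz_def bdd_above_def by blast
  then have "\<bar>c * u x\<bar> \<le> \<bar>c\<bar> * a" for x by (simp add: abs_mult mult_left_mono)
  moreover obtain L where "L-lipschitz_on UNIV u"
    using assms unfolding bounded_lipschitz_def by blast
  then have "(\<bar>c\<bar> * L)-lipschitz_on UNIV (\<lambda>x. c * u x)" by (rule lipschitz_on_cmult_real)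
  ultimately show ?thesis unfolding bounded_lipschitz_def bdd_above_def by blast
qed

lemma bounded_lipschitz_diff:
  "bounded_lipschitz u \<Longrightarrow> bounded_lipschitz v \<Longrightarrow> bounded_lipschitz (\<lambda>x. u x - v x)"
  using bounded_lipschitz_add[of u "\<lambda>x. (-1) * v x"] bounded_lipschitz_cmult[of v "-1"] by simp

lemma bounded_lipschitz_divide: "bounded_lipschitz u \<Longrightarrow> bounded_lipschitz (\<lambda>x. u x / c)"
  using bounded_lipschitz_cmult[of u "1 / c"] by simp

lemma bounded_lipschitz_sum_list:
  "(\<And>v. v \<in> set vs \<Longrightarrow> bounded_lipschitz (h v)) \<Longrightarrow>
    bounded_lipschitz (\<lambda>x. \<Sum>v\<leftarrow>vs. h v x)"
  by (induction vs) (auto intro: bounded_lipschitz_add bounded_lipschitz_const)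

lemma bounded_lipschitz_gs_list:
  assumes "\<And>i. i < m \<Longrightarrow> bounded_lipschitz (f i)" and "v \<in> set (gs_list ip f m)"
  shows "bounded_lipschitz v"
  using assms
proof (induction m arbitrary: v)
  case (Suc m)
  let ?w = "\<lambda>x. f m x - (\<Sum>v\<leftarrow>gs_list ip f m. ip (f m) v * v x)"
  have "bounded_lipschitz ?w"
    using Suc by (intro bounded_lipschitz_diff bounded_lipschitz_sum_list bounded_lipschitz_cmult) auto
  then show ?case
    using Suc by (auto simp: Let_def intro: bounded_lipschitz_divide)
qed simp

lemma length_gs_list [simp]: "length (gs_list ip f m) = m"
  by (induction m) (auto simp: Let_def)

lemma bounded_lipschitz_gram_schmidt:
  "1 \<le> m \<Longrightarrow> (\<And>i. 1 \<le> i \<Longrightarrow> i \<le> m \<Longrightarrow> bounded_lipschitz (f i)) \<Longrightarrow>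
    bounded_lipschitz (gram_schmidt ip f m)"
  unfolding gram_schmidt_def by (rule bounded_lipschitz_gs_list[of m "\<lambda>i. f (Suc i)" _ ip]) auto

lemma supnorm_le_iff: "bdd_above (range (\<lambda>x. \<bar>u x\<bar>)) \<Longrightarrow> supnorm u \<le> t \<longleftrightarrow> (\<forall>x. \<bar>u x\<bar> \<le> t)"
  unfolding supnorm_def by (simp add: cSUP_le_iff)

lemma lipschitz_on_lipconst:
  fixes u :: "'x::metric_space \<Rightarrow> real"
  assumes "\<exists>L. L-lipschitz_on UNIV u"
  shows "(lipconst u)-lipschitz_on UNIV u"
proof -
  let ?S = "{L. L-lipschitz_on UNIV u}"
  have "?S = {L. 0 \<le> L \<and> (\<forall>x y. dist (u x) (u y) \<le> L * dist x y)}"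
    unfolding lipschitz_on_def by simp
  moreover have "closed {L::real. 0 \<le> L \<and> (\<forall>x y. dist (u x) (u y) \<le> L * dist x y)}"
    by (intro closed_Collect_conj closed_Collect_all closed_Collect_le continuous_intros)
  ultimately have "closed ?S" by simp
  moreover have "bdd_below ?S" unfolding bdd_below_def using lipschitz_on_nonneg by blast
  ultimately have "Inf ?S \<in> ?S" using assms by (intro closed_contains_Inf) auto
  then show ?thesis unfolding lipconst_def by simp
qed

lemma lipconst_le_iff:
  fixes u :: "'x::metric_space \<Rightarrow> real"
  assumes "\<exists>L. L-lipschitz_on UNIV u"
  shows "lipconst u \<le> t \<longleftrightarrow> t-lipschitz_on UNIV u"
proof
  show "lipconst u \<le> t \<Longrightarrow> t-lipschitz_on UNIV u"
    using lipschitz_on_lipconst[OF assms] lipschitz_on_mono by blast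
  have "bdd_below {L. L-lipschitz_on UNIV u}" unfolding bdd_below_def using lipschitz_on_nonneg by blast
  then show "t-lipschitz_on UNIV u \<Longrightarrow> lipconst u \<le> t"
    unfolding lipconst_def by (intro cInf_lower) auto
qed

lemma l2norm_const: "prob_space \<nu> \<Longrightarrow> l2norm \<nu> (\<lambda>x. c) = 0"
  unfolding l2norm_def cov_nu_def by (simp add: prob_space.prob_space)

lemma supnorm_pos:
  assumes "prob_space \<nu>" "l2norm \<nu> u \<noteq> 0" "bdd_above (range (\<lambda>x. \<bar>u x\<bar>))"
  shows "0 < supnorm u"
proof (rule ccontr)
  assume "\<not> 0 < supnorm u"
  then have "u = (\<lambda>x. 0)" using supnorm_le_iff[OF assms(3), of 0] by fastforce
  then show False using assms l2norm_const by metis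
qed

lemma lipconst_pos:
  fixes u :: "'x::metric_space \<Rightarrow> real"
  assumes "prob_space \<nu>" "l2norm \<nu> u \<noteq> 0" "\<exists>L. L-lipschitz_on UNIV u"
  shows "0 < lipconst u"
proof (rule ccontr)
  assume "\<not> 0 < lipconst u"
  then have "0-lipschitz_on UNIV u" using lipconst_le_iff[OF assms(3), of 0] by simp
  then have "u = (\<lambda>x. u undefined)" using lipschitz_onD[of 0 UNIV u] by fastforce
  then show False using assms l2norm_const by metis
qed

lemma gram_schmidt_family_bounds:
  fixes g :: "'p \<Rightarrow> 'x::metric_space \<Rightarrow> real" and mu :: "nat \<Rightarrow> 'p" and Pset :: "'p set"
    and ip :: "('x \<Rightarrow> real) \<Rightarrow> ('x \<Rightarrow> real) \<Rightarrow> real" and n :: nat and \<nu> :: "'x measure"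
  assumes prob_nu: "prob_space \<nu>"
    and g: "\<And>\<mu>. \<mu> \<in> Pset \<Longrightarrow> bounded_lipschitz (g \<mu>)"
    and bdd: "bdd_above ((\<lambda>\<mu>. supnorm (g \<mu>)) ` Pset)" "bdd_above ((\<lambda>\<mu>. lipconst (g \<mu>)) ` Pset)"
    and mu: "\<And>i. 1 \<le> i \<Longrightarrow> i < n \<Longrightarrow> mu i \<in> Pset" and n: "2 \<le> n"
    and nondegenerate: "l2norm \<nu> (g (mu 1)) \<noteq> 0"
  defines "U \<equiv> g ` Pset \<union> (\<lambda>m. gram_schmidt ip (\<lambda>i. g (mu i)) m) ` {1..<n}"
    and "a \<equiv> Max (insert (SUP \<mu>\<in>Pset. supnorm (g \<mu>)) ((\<lambda>m. supnorm (gram_schmidt ip (\<lambda>i. g (mu i)) m)) ` {1..<n}))"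
    and "b \<equiv> Max (insert (SUP \<mu>\<in>Pset. lipconst (g \<mu>)) ((\<lambda>m. lipconst (gram_schmidt ip (\<lambda>i. g (mu i)) m)) ` {1..<n}))"
  shows "\<And>u. u \<in> U \<Longrightarrow> bounded_lipschitz u \<and> supnorm u \<le> a \<and> lipconst u \<le> b"
    and "U \<noteq> {}" "0 < a" "0 < b"
proof -
  have gs: "bounded_lipschitz (gram_schmidt ip (\<lambda>i. g (mu i)) m)" if "m \<in> {1..<n}" for m
    using that by (intro bounded_lipschitz_gram_schmidt g mu) auto
  have le_Max: "supnorm (g \<mu>) \<le> a" "lipconst (g \<mu>) \<le> b" if "\<mu> \<in> Pset" for \<mu>
    using that unfolding a_def b_def
    by (intro order_trans[OF cSUP_upper[OF _ bdd(1)] Max_ge] order_trans[OF cSUP_upper[OF _ bdd(2)] Max_ge]; simp)+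
  show "bounded_lipschitz u \<and> supnorm u \<le> a \<and> lipconst u \<le> b" if "u \<in> U" for u
    using that g gs le_Max unfolding U_def a_def b_def by (auto intro: Max_ge)
  have "mu 1 \<in> Pset" using mu n by simp
  then show "U \<noteq> {}" unfolding U_def by blast
  have "0 < supnorm (g (mu 1))" "0 < lipconst (g (mu 1))"
    using g[OF \<open>mu 1 \<in> Pset\<close>] supnorm_pos[OF prob_nu nondegenerate] lipconst_pos[OF prob_nu nondegenerate]
    unfolding bounded_lipschitz_def by blast+
  then show "0 < a" "0 < b" using le_Max[OF \<open>mu 1 \<in> Pset\<close>] by linarith+
qed

lemma countable_dense_UNIV:
  obtains D :: "'a::{metric_space, second_countable_topology} set"
  where "countable D" "closure D = UNIV"
proof -
  obtain D :: "'a set" where D: "countable D" "\<And>X. open X \<Longrightarrow> X \<noteq> {} \<Longrightarrow> \<exists>d \<in> D. d \<in> X"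
    using countable_dense_setE by blast
  have "x \<in> closure D" for x
    unfolding closure_approachable using D(2)[of "ball x _"] by (fastforce simp: dist_commute)
  then show ?thesis using D(1) that by blast
qed

lemma borel_measurable_supnorm:
  fixes u :: "'w \<Rightarrow> 'x::{metric_space, second_countable_topology} \<Rightarrow> real"
  assumes meas: "\<And>x. (\<lambda>\<omega>. u \<omega> x) \<in> borel_measurable F"
    and u: "\<And>\<omega>. \<omega> \<in> space F \<Longrightarrow> bdd_above (range (\<lambda>x. \<bar>u \<omega> x\<bar>)) \<and> continuous_on UNIV (u \<omega>)"
  shows "(\<lambda>\<omega>. supnorm (u \<omega>)) \<in> borel_measurable F"
proof -
  obtain D :: "'x set" where D: "countable D" "closure D = UNIV" by (rule countable_dense_UNIV)
  have "supnorm (u \<omega>) \<le> t \<longleftrightarrow> (\<forall>x\<in>D. \<bar>u \<omega> x\<bar> \<le> t)" if "\<omega> \<in> space F" for \<omega> t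
  proof -
    have "closed {x. \<bar>u \<omega> x\<bar> \<le> t}"
      using u[OF that] by (intro closed_Collect_le continuous_intros) auto
    then have "(\<forall>x\<in>D. \<bar>u \<omega> x\<bar> \<le> t) \<longleftrightarrow> (\<forall>x. \<bar>u \<omega> x\<bar> \<le> t)"
      using closure_minimal[of D "{x. \<bar>u \<omega> x\<bar> \<le> t}"] D(2) by auto
    then show ?thesis using supnorm_le_iff[of "u \<omega>"] u[OF that] by blast
  qed
  then have "{\<omega> \<in> space F. supnorm (u \<omega>) \<le> t} = {\<omega> \<in> space F. \<forall>x\<in>D. \<bar>u \<omega> x\<bar> \<le> t}" for t
    by blast
  moreover have "Measurable.pred F (\<lambda>\<omega>. \<forall>x\<in>D. \<bar>u \<omega> x\<bar> \<le> t)" for t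
    using D(1) meas by measurable
  ultimately show ?thesis
    unfolding borel_measurable_iff_le pred_def by simp
qed

lemma borel_measurable_lipconst:
  fixes u :: "'w \<Rightarrow> 'x::{metric_space, second_countable_topology} \<Rightarrow> real"
  assumes meas: "\<And>x. (\<lambda>\<omega>. u \<omega> x) \<in> borel_measurable F"
    and u: "\<And>\<omega>. \<omega> \<in> space F \<Longrightarrow> \<exists>L. L-lipschitz_on UNIV (u \<omega>)"
  shows "(\<lambda>\<omega>. lipconst (u \<omega>)) \<in> borel_measurable F"
proof -
  obtain D :: "'x set" where D: "countable D" "closure D = UNIV" by (rule countable_dense_UNIV)
  have "lipconst (u \<omega>) \<le> t \<longleftrightarrow> t-lipschitz_on D (u \<omega>)" if "\<omega> \<in> space F" for \<omega> t
    using lipschitz_on_closure[of t D "u \<omega>"] lipschitz_on_subset[of t UNIV "u \<omega>" D]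
      lipschitz_on_continuous_on u[OF that] lipconst_le_iff[OF u[OF that]] D(2)
    by (metis subset_UNIV)
  then have "{\<omega> \<in> space F. lipconst (u \<omega>) \<le> t} = {\<omega> \<in> space F. t-lipschitz_on D (u \<omega>)}" for t
    by blast
  moreover have "Measurable.pred F (\<lambda>\<omega>. t-lipschitz_on D (u \<omega>))" for t
    unfolding lipschitz_on_def dist_real_def using D(1) meas by measurable
  ultimately show ?thesis
    unfolding borel_measurable_iff_le pred_def by simp
qed

lemma borel_measurable_Max_supnorm_lipconst:
  fixes h :: "'i \<Rightarrow> 'w \<Rightarrow> 'x::{metric_space, second_countable_topology} \<Rightarrow> real"
  assumes I: "finite I" "I \<noteq> {}"
    and meas: "\<And>i x. i \<in> I \<Longrightarrow> (\<lambda>\<omega>. h i \<omega> x) \<in> borel_measurable F"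
    and h: "\<And>i \<omega>. i \<in> I \<Longrightarrow> \<omega> \<in> space F \<Longrightarrow> bounded_lipschitz (h i \<omega>)"
  shows "(\<lambda>\<omega>. Max (insert a ((\<lambda>i. supnorm (h i \<omega>)) ` I))) \<in> borel_measurable F"
    and "(\<lambda>\<omega>. Max (insert b ((\<lambda>i. lipconst (h i \<omega>)) ` I))) \<in> borel_measurable F"
proof -
  have "(\<lambda>\<omega>. supnorm (h i \<omega>)) \<in> borel_measurable F" if i: "i \<in> I" for i
  proof (rule borel_measurable_supnorm)
    show "(\<lambda>\<omega>. h i \<omega> x) \<in> borel_measurable F" for x using meas i .
    show "bdd_above (range (\<lambda>x. \<bar>h i \<omega> x\<bar>)) \<and> continuous_on UNIV (h i \<omega>)" if "\<omega> \<in> space F" for \<omega>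
      using h[OF i that] unfolding bounded_lipschitz_def by (meson lipschitz_on_continuous_on)
  qed
  then show "(\<lambda>\<omega>. Max (insert a ((\<lambda>i. supnorm (h i \<omega>)) ` I))) \<in> borel_measurable F"
    using I by (simp add: Max_insert borel_measurable_Max)
  have "(\<lambda>\<omega>. lipconst (h i \<omega>)) \<in> borel_measurable F" if "i \<in> I" for i
    using meas h that by (intro borel_measurable_lipconst) (auto simp: bounded_lipschitz_def)
  then show "(\<lambda>\<omega>. Max (insert b ((\<lambda>i. lipconst (h i \<omega>)) ` I))) \<in> borel_measurable F"
    using I by (simp add: Max_insert borel_measurable_Max)
qed

section \<open>The rate function\<close>

lemma ln_two_plus_inverse_ge_one: "0 < a \<Longrightarrow> a \<le> 1 \<Longrightarrow> 1 \<le> ln (2 + 1 / (a::real))"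
proof -
  assume a: "0 < a" "a \<le> 1"
  have "(1::real) \<le> ln 3" using exp_le by (simp add: ln_ge_iff)
  also have "ln 3 \<le> ln (2 + 1 / a)" using a by (subst ln_le_cancel_iff) (auto simp: field_simps)
  finally show ?thesis .
qed

lemma phi_le_one: "1 \<le> d \<Longrightarrow> 0 < a \<Longrightarrow> a \<le> 1 \<Longrightarrow> phi d \<alpha> a \<le> 1"
  using ln_two_plus_inverse_ge_one[of a]
  by (auto simp: phi_def power_le_one divide_le_eq)

lemma phi_mono:
  assumes d: "1 \<le> d" and \<alpha>: "0 < \<alpha>" and a: "0 < a" "a \<le> b"
  shows "phi d \<alpha> a \<le> phi d \<alpha> b"
proof (cases "1 < b")
  case True
  show ?thesis
  proof (cases "1 < a")
    case True
    then show ?thesis using \<open>1 < b\<close> a \<alpha> by (simp add: phi_def powr_mono2)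
  next
    case False
    then have "phi d \<alpha> a \<le> 1" using phi_le_one[OF d a(1)] by simp
    also have "1 \<le> b powr \<alpha>" using True \<alpha> by (simp add: ge_one_powr_ge_zero)
    finally show ?thesis using True False by (simp add: phi_def)
  qed
next
  case False
  have "a / ln (2 + 1 / a) \<le> b / ln (2 + 1 / b)"
  proof (rule frac_le)
    show "ln (2 + 1 / b) \<le> ln (2 + 1 / a)"
      using a by (subst ln_le_cancel_iff) (auto simp: field_simps intro: add_pos_pos)
  qed (use a False ln_two_plus_inverse_ge_one[of b] in auto)
  moreover have "0 \<le> a / ln (2 + 1 / a)" using a False ln_two_plus_inverse_ge_one[of a] by simp
  ultimately show ?thesis using a False by (simp add: phi_def power_mono)
qed

section \<open>Wasserstein distance to the empirical measure\<close>

lemma emp_mean_cong: "(\<And>k. k < m \<Longrightarrow> zs k = zs' k) \<Longrightarrow> emp_mean zs m u = emp_mean zs' m u"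
  unfolding emp_mean_def by simp

lemma emp_mean_divide: "emp_mean zs m (\<lambda>x. u x / c) = emp_mean zs m u / c"
  unfolding emp_mean_def by (simp add: sum_divide_distrib mult.commute)

lemma emp_mean_diff: "emp_mean zs m (\<lambda>x. u x - v x) = emp_mean zs m u - emp_mean zs m v"
  unfolding emp_mean_def by (simp add: sum_subtractf diff_divide_distrib)

lemma emp_mean_const: "1 \<le> m \<Longrightarrow> emp_mean zs m (\<lambda>x. c) = c"
  unfolding emp_mean_def by simp

lemma abs_emp_mean_le:
  assumes "1 \<le> m" "\<And>k. k < m \<Longrightarrow> \<bar>u (zs k)\<bar> \<le> a k"
  shows "\<bar>emp_mean zs m u\<bar> \<le> (\<Sum>k<m. a k) / m"
proof -
  have "\<bar>\<Sum>k<m. u (zs k)\<bar> \<le> (\<Sum>k<m. a k)"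
    by (rule order_trans[OF sum_abs]) (auto intro: sum_mono assms(2))
  then show ?thesis using assms(1) unfolding emp_mean_def by (simp add: divide_right_mono)
qed

lemma lipschitz_on_mult_bounded:
  fixes g h :: "'x::metric_space \<Rightarrow> real"
  assumes "\<And>x. \<bar>g x\<bar> \<le> a" "\<And>x. \<bar>h x\<bar> \<le> a" "b-lipschitz_on UNIV g" "b-lipschitz_on UNIV h"
  shows "(2 * a * b)-lipschitz_on UNIV (\<lambda>x. g x * h x)"
proof (rule lipschitz_onI)
  have "0 \<le> a" using assms(1) order_trans abs_ge_zero by blast
  then show "0 \<le> 2 * a * b" using lipschitz_on_nonneg[OF assms(3)] by simp
  fix x y
  have "g x * h x - g y * h y = g x * (h x - h y) + h y * (g x - g y)" by (simp add: algebra_simps)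
  then have "\<bar>g x * h x - g y * h y\<bar> \<le> \<bar>g x\<bar> * \<bar>h x - h y\<bar> + \<bar>h y\<bar> * \<bar>g x - g y\<bar>"
    by (metis abs_mult abs_triangle_ineq)
  also have "\<dots> \<le> a * (b * dist x y) + a * (b * dist x y)"
    using assms \<open>0 \<le> a\<close> lipschitz_onD[OF assms(3)] lipschitz_onD[OF assms(4)]
    by (intro add_mono mult_mono) (auto simp: dist_real_def)
  finally show "dist (g x * h x) (g y * h y) \<le> 2 * a * b * dist x y" by (simp add: dist_real_def)
qed

text \<open>Kantorovich--Rubinstein form of the Wasserstein-1 distance between \<open>\<nu>\<close> and the empirical
  measure of \<open>zs 0, \<dots>, zs (m - 1)\<close>.\<close>

definition W1_emp :: "'x::euclidean_space measure \<Rightarrow> (nat \<Rightarrow> 'x) \<Rightarrow> nat \<Rightarrow> real" where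
  "W1_emp \<nu> zs m = (SUP u \<in> {u. 1-lipschitz_on UNIV u}. \<bar>(\<integral>x. u x \<partial>\<nu>) - emp_mean zs m u\<bar>)"

lemma W1_emp_cong: "(\<And>k. k < m \<Longrightarrow> zs k = zs' k) \<Longrightarrow> W1_emp \<nu> zs m = W1_emp \<nu> zs' m"
  unfolding W1_emp_def using emp_mean_cong[of m zs zs'] by simp

context
  fixes \<nu> :: "'x::euclidean_space measure"
  assumes prob_nu: "prob_space \<nu>" and sets_nu: "sets \<nu> = sets borel"
begin

lemma borel_measurable_continuous_nu: "continuous_on UNIV u \<Longrightarrow> u \<in> borel_measurable \<nu>"
  using borel_measurable_continuous_onI measurable_cong_sets[OF sets_nu refl] by blast

lemma integrable_norm_of_exp_moment:
  assumes \<alpha>: "1 \<le> \<alpha>" and \<beta>: "0 < \<beta>" and exp_moment: "integrable \<nu> (\<lambda>x. exp (\<beta> * norm x powr \<alpha>))"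
  shows "integrable \<nu> norm"
proof (rule Bochner_Integration.integrable_bound)
  interpret prob_space \<nu> by (rule prob_nu)
  show "integrable \<nu> (\<lambda>x. 1 + exp (\<beta> * norm x powr \<alpha>) / \<beta>)"
    using exp_moment by auto
  show "norm \<in> borel_measurable \<nu>"
    by (rule borel_measurable_continuous_nu) (intro continuous_intros)
  have "norm x \<le> 1 + exp (\<beta> * norm x powr \<alpha>) / \<beta>" for x :: 'x
  proof (cases "norm x \<le> 1")
    case False
    then have "norm x \<le> norm x powr \<alpha>" using \<alpha> powr_mono[of 1 \<alpha> "norm x"] by simp
    also have "\<dots> = (\<beta> * norm x powr \<alpha>) / \<beta>" using \<beta> by simp
    also have "\<dots> \<le> exp (\<beta> * norm x powr \<alpha>) / \<beta>"
      using \<beta> exp_ge_add_one_self[of "\<beta> * norm x powr \<alpha>"] by (intro divide_right_mono) linarith+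
    finally show ?thesis by simp
  qed (use \<beta> in \<open>auto intro: add_increasing2\<close>)
  then show "AE x in \<nu>. norm (norm x) \<le> norm (1 + exp (\<beta> * norm x powr \<alpha>) / \<beta>)"
    using \<beta> by (intro AE_I2) simp
qed

context
  assumes integrable_norm: "integrable \<nu> norm"
begin

lemma integrable_lipschitz:
  fixes u :: "'x \<Rightarrow> real"
  assumes L: "L-lipschitz_on UNIV u"
  shows "integrable \<nu> u"
proof (rule Bochner_Integration.integrable_bound)
  interpret prob_space \<nu> by (rule prob_nu)
  show "integrable \<nu> (\<lambda>x. \<bar>u 0\<bar> + L * norm x)" using integrable_norm by auto
  show "u \<in> borel_measurable \<nu>"
    by (rule borel_measurable_continuous_nu) (rule lipschitz_on_continuous_on[OF L])
  have "\<bar>u x\<bar> \<le> \<bar>u 0\<bar> + L * norm x" for x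
    using lipschitz_onD[OF L, of x 0] by (simp add: dist_real_def dist_norm)
  then show "AE x in \<nu>. norm (u x) \<le> norm (\<bar>u 0\<bar> + L * norm x)"
    using lipschitz_on_nonneg[OF L] by (intro AE_I2) simp
qed

lemma abs_integral_diff_emp_mean_le_first_moments:
  fixes u :: "'x \<Rightarrow> real"
  assumes m: "1 \<le> m" and u: "1-lipschitz_on UNIV u"
  shows "\<bar>(\<integral>x. u x \<partial>\<nu>) - emp_mean zs m u\<bar> \<le> (\<integral>x. norm x \<partial>\<nu>) + (\<Sum>k<m. norm (zs k)) / m"
proof -
  interpret prob_space \<nu> by (rule prob_nu)
  have iu: "integrable \<nu> u" by (rule integrable_lipschitz[OF u])
  have near_origin: "\<bar>u x - u 0\<bar> \<le> norm x" for x
    using lipschitz_onD[OF u, of x 0] by (simp add: dist_real_def dist_norm)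
  have "(\<integral>x. u x \<partial>\<nu>) - u 0 = (\<integral>x. u x - u 0 \<partial>\<nu>)" using iu by (simp add: prob_space)
  also have "\<bar>\<dots>\<bar> \<le> (\<integral>x. norm x \<partial>\<nu>)"
    using iu integrable_norm near_origin by (intro integral_abs_bound_integral) auto
  finally have "\<bar>(\<integral>x. u x \<partial>\<nu>) - u 0\<bar> \<le> (\<integral>x. norm x \<partial>\<nu>)" .
  moreover have "\<bar>emp_mean zs m u - u 0\<bar> \<le> (\<Sum>k<m. norm (zs k)) / m"
    using abs_emp_mean_le[OF m, where u = "\<lambda>x. u x - u 0" and a = "\<lambda>k. norm (zs k)"] near_origin m
    by (simp add: emp_mean_diff emp_mean_const)
  ultimately show ?thesis by linarith
qed

lemma bdd_above_emp_mean_deviation: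
  "1 \<le> m \<Longrightarrow> bdd_above ((\<lambda>u. \<bar>(\<integral>x. u x \<partial>\<nu>) - emp_mean zs m u\<bar>) ` {u. 1-lipschitz_on UNIV u})"
  unfolding bdd_above_def using abs_integral_diff_emp_mean_le_first_moments by blast

lemma abs_integral_diff_emp_mean_le:
  fixes v :: "'x \<Rightarrow> real"
  assumes m: "1 \<le> m" and v: "c-lipschitz_on UNIV v"
  shows "\<bar>(\<integral>x. v x \<partial>\<nu>) - emp_mean zs m v\<bar> \<le> c * W1_emp \<nu> zs m"
proof (cases "c = 0")
  case True
  interpret prob_space \<nu> by (rule prob_nu)
  have "v x = v 0" for x using lipschitz_onD[OF v, of x 0] True by simp
  then have "v = (\<lambda>x. v 0)" by blast
  moreover have "1-lipschitz_on UNIV (\<lambda>x::'x. 0::real)"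
    using lipschitz_on_constant by (rule lipschitz_on_mono) auto
  then have "0 \<le> W1_emp \<nu> zs m"
    unfolding W1_emp_def using m by (intro cSUP_upper2[OF bdd_above_emp_mean_deviation]) auto
  moreover have "(\<integral>x. v 0 \<partial>\<nu>) - emp_mean zs m (\<lambda>x. v 0) = 0"
    using m by (simp add: emp_mean_const prob_space)
  ultimately show ?thesis using True by simp
next
  case False
  then have c: "0 < c" using lipschitz_on_nonneg[OF v] by simp
  have "(\<bar>1 / c\<bar> * c)-lipschitz_on UNIV (\<lambda>x. 1 / c * v x)" by (rule lipschitz_on_cmult_real[OF v])
  then have "1-lipschitz_on UNIV (\<lambda>x. v x / c)" using c by simp
  then have "\<bar>(\<integral>x. v x / c \<partial>\<nu>) - emp_mean zs m (\<lambda>x. v x / c)\<bar> \<le> W1_emp \<nu> zs m"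
    unfolding W1_emp_def by (intro cSUP_upper bdd_above_emp_mean_deviation m) simp
  then show ?thesis
    using c by (simp add: emp_mean_divide diff_divide_distrib[symmetric] divide_le_eq mult.commute)
qed

lemma cov_deviation_le:
  fixes g h :: "'x \<Rightarrow> real"
  assumes m: "1 \<le> m" and bound: "\<And>x. \<bar>g x\<bar> \<le> a" "\<And>x. \<bar>h x\<bar> \<le> a"
    and lip: "b-lipschitz_on UNIV g" "b-lipschitz_on UNIV h"
  shows "\<bar>cov_nu \<nu> g h - emp_cov zs m g h\<bar> \<le> 4 * a * b * W1_emp \<nu> zs m"
proof -
  interpret prob_space \<nu> by (rule prob_nu)
  let ?W = "W1_emp \<nu> zs m"
  have "0 \<le> a" using bound(1) order_trans abs_ge_zero by blast
  have prod: "\<bar>(\<integral>x. g x * h x \<partial>\<nu>) - emp_mean zs m (\<lambda>x. g x * h x)\<bar> \<le> 2 * a * b * ?W"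
    by (rule abs_integral_diff_emp_mean_le[OF m lipschitz_on_mult_bounded[OF bound lip]])
  have dev_g: "\<bar>(\<integral>x. g x \<partial>\<nu>) - emp_mean zs m g\<bar> \<le> b * ?W"
    and dev_h: "\<bar>(\<integral>x. h x \<partial>\<nu>) - emp_mean zs m h\<bar> \<le> b * ?W"
    by (intro abs_integral_diff_emp_mean_le m lip)+
  have "\<bar>(\<integral>x. g x \<partial>\<nu>)\<bar> \<le> (\<integral>x. a \<partial>\<nu>)"
    using integrable_lipschitz[OF lip(1)] bound by (intro integral_abs_bound_integral) auto
  then have int_g: "\<bar>(\<integral>x. g x \<partial>\<nu>)\<bar> \<le> a" by (simp add: prob_space)
  have emp_h: "\<bar>emp_mean zs m h\<bar> \<le> a"
    using abs_emp_mean_le[OF m, of h zs "\<lambda>_. a"] bound(2) m by simp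
  have "cov_nu \<nu> g h - emp_cov zs m g h
      = ((\<integral>x. g x * h x \<partial>\<nu>) - emp_mean zs m (\<lambda>x. g x * h x))
        - (\<integral>x. g x \<partial>\<nu>) * ((\<integral>x. h x \<partial>\<nu>) - emp_mean zs m h)
        - emp_mean zs m h * ((\<integral>x. g x \<partial>\<nu>) - emp_mean zs m g)"
    unfolding cov_nu_def emp_cov_def by (simp add: algebra_simps)
  moreover have "\<bar>(\<integral>x. g x \<partial>\<nu>) * ((\<integral>x. h x \<partial>\<nu>) - emp_mean zs m h)\<bar> \<le> a * (b * ?W)"
    unfolding abs_mult using int_g dev_h \<open>0 \<le> a\<close> by (intro mult_mono) auto
  moreover have "\<bar>emp_mean zs m h * ((\<integral>x. g x \<partial>\<nu>) - emp_mean zs m g)\<bar> \<le> a * (b * ?W)"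
    unfolding abs_mult using emp_h dev_g \<open>0 \<le> a\<close> by (intro mult_mono) auto
  ultimately show ?thesis using prod by (simp add: abs_le_iff)
qed

lemma SUP_cov_deviation_le:
  assumes m: "1 \<le> m" and U: "U \<noteq> {}"
    and bounds: "\<And>u. u \<in> U \<Longrightarrow> bounded_lipschitz u \<and> supnorm u \<le> a \<and> lipconst u \<le> b"
  shows "(SUP gh\<in>U \<times> U. \<bar>cov_nu \<nu> (fst gh) (snd gh) - emp_cov zs m (fst gh) (snd gh)\<bar>)
    \<le> 4 * a * b * W1_emp \<nu> zs m"
proof (rule cSUP_least)
  have bound_lip: "(\<forall>x. \<bar>u x\<bar> \<le> a) \<and> b-lipschitz_on UNIV u" if "u \<in> U" for u
  proof -
    have "bdd_above (range (\<lambda>x. \<bar>u x\<bar>))" "\<exists>L. L-lipschitz_on UNIV u" "supnorm u \<le> a" "lipconst u \<le> b"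
      using bounds[OF that] unfolding bounded_lipschitz_def by auto
    then show ?thesis by (simp add: supnorm_le_iff lipconst_le_iff)
  qed
  fix gh assume "gh \<in> U \<times> U"
  then have "fst gh \<in> U" "snd gh \<in> U" by auto
  then show "\<bar>cov_nu \<nu> (fst gh) (snd gh) - emp_cov zs m (fst gh) (snd gh)\<bar> \<le> 4 * a * b * W1_emp \<nu> zs m"
    using bound_lip by (intro cov_deviation_le m) auto
qed (use U in simp)

lemma borel_measurable_W1_emp_product_topology:
  assumes m: "1 \<le> m"
  shows "(\<lambda>zs::nat \<Rightarrow> 'x. W1_emp \<nu> zs m) \<in> borel_measurable borel"
proof (subst borel_measurable_iff_greater, intro allI)
  fix t :: real
  let ?U = "{u::'x \<Rightarrow> real. 1-lipschitz_on UNIV u}"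
  let ?dev = "\<lambda>u zs. \<bar>(\<integral>x. u x \<partial>\<nu>) - emp_mean zs m u\<bar>"
  have "1-lipschitz_on UNIV (\<lambda>x::'x. 0::real)" by (rule lipschitz_on_mono[OF lipschitz_on_constant]) auto
  then have "(\<lambda>x. 0) \<in> ?U" by simp
  then have "{zs. t < W1_emp \<nu> zs m} = (\<Union>u\<in>?U. {zs. t < ?dev u zs})"
    unfolding W1_emp_def using less_cSUP_iff[OF _ bdd_above_emp_mean_deviation[OF m]] by auto
  moreover have "open {zs. t < ?dev u zs}" if "u \<in> ?U" for u
  proof (rule open_Collect_less)
    have "continuous_on UNIV u" using that lipschitz_on_continuous_on by blast
    then have "continuous_on UNIV (\<lambda>zs::nat \<Rightarrow> 'x. u (zs k))" for k
      by (rule continuous_on_compose2[OF _ continuous_on_product_coordinates]) auto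
    then show "continuous_on UNIV (?dev u)"
      unfolding emp_mean_def using m by (intro continuous_intros) auto
  qed simp
  ultimately show "{zs \<in> space borel. t < W1_emp \<nu> zs m} \<in> sets borel"
    by (simp add: borel_open open_UN)
qed

lemma borel_measurable_W1_emp:
  assumes m: "1 \<le> m"
  shows "(\<lambda>zs. W1_emp \<nu> zs m) \<in> borel_measurable (PiM {..<m} (\<lambda>_. \<nu>))"
proof -
  let ?extend = "\<lambda>zs::nat \<Rightarrow> 'x. \<lambda>k. if k < m then zs k else 0"
  have "?extend \<in> measurable (PiM {..<m} (\<lambda>_. \<nu>)) (PiM UNIV (\<lambda>_. borel))"
  proof (rule measurable_PiM_single')
    fix k
    have "k < m \<Longrightarrow> (\<lambda>zs. zs k) \<in> measurable (PiM {..<m} (\<lambda>_. \<nu>)) borel"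
      using measurable_component_singleton[of k "{..<m}" "\<lambda>_. \<nu>"]
      unfolding measurable_cong_sets[OF refl sets_nu] by simp
    then show "(\<lambda>zs. ?extend zs k) \<in> borel_measurable (PiM {..<m} (\<lambda>_. \<nu>))"
      by (cases "k < m") auto
  qed simp
  moreover have "(\<lambda>zs. W1_emp \<nu> zs m) \<in> borel_measurable (PiM UNIV (\<lambda>_::nat. borel::'x measure))"
    using borel_measurable_W1_emp_product_topology[OF m]
      measurable_cong_sets[OF sets_PiM_equal_borel refl] by blast
  ultimately have "(\<lambda>zs. W1_emp \<nu> (?extend zs) m) \<in> borel_measurable (PiM {..<m} (\<lambda>_. \<nu>))"
    by (simp add: measurable_compose)
  moreover have "W1_emp \<nu> (?extend zs) m = W1_emp \<nu> zs m" for zs by (rule W1_emp_cong) simp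
  ultimately show ?thesis by simp
qed

end
end

section \<open>Independent sample batches\<close>

lemma (in prob_space) indep_sets_reindex:
  assumes inj: "inj_on f I" and indep: "indep_sets F (f ` I)"
  shows "indep_sets (\<lambda>i. F (f i)) I"
proof (rule indep_setsI)
  show "F (f i) \<subseteq> events" if "i \<in> I" for i
    using indep that unfolding indep_sets_def by auto
  fix A J assume J: "J \<noteq> {}" "J \<subseteq> I" "finite J" and A: "\<forall>j\<in>J. A j \<in> F (f j)"
  have inj_J: "inj_on f J" using inj J(2) by (rule inj_on_subset)
  define A' where "A' y = A (the_inv_into J f y)" for y
  have A'_f: "A' (f j) = A j" if "j \<in> J" for j
    using the_inv_into_f_f[OF inj_J that] unfolding A'_def by simp
  have "prob (\<Inter>y\<in>f ` J. A' y) = (\<Prod>y\<in>f ` J. prob (A' y))"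
    using J A A'_f by (intro indep_setsD[OF indep]) auto
  then show "prob (\<Inter>j\<in>J. A j) = (\<Prod>j\<in>J. prob (A j))"
    using A'_f by (simp add: prod.reindex[OF inj_J] cong: INF_cong prod.cong)
qed

lemma sets_batch_sigma:
  "sets (batch_sigma P Zs m) =
    sigma_sets (space P) {Zs i k -` A \<inter> space P | i k A. 1 \<le> i \<and> i \<le> m \<and> A \<in> sets borel}"
  unfolding batch_sigma_def by (rule sets_measure_of) auto

lemma space_batch_sigma [simp]: "space (batch_sigma P Zs m) = space P"
  unfolding batch_sigma_def by (rule space_measure_of) auto

lemma subalgebra_batch_sigma_mono:
  "m \<le> m' \<Longrightarrow> subalgebra (batch_sigma P Zs m') (batch_sigma P Zs m)"
  unfolding subalgebra_def sets_batch_sigma by (auto intro!: sigma_sets_mono') (use le_trans in blast)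

locale iid_batches = prob_space P
  for P :: "'w measure" +
  fixes \<nu> :: "'x::euclidean_space measure" and Zs :: "nat \<Rightarrow> nat \<Rightarrow> 'w \<Rightarrow> 'x"
  assumes sets_nu: "sets \<nu> = sets borel"
    and indep_Zs: "indep_vars (\<lambda>_. borel) (\<lambda>(m, k). Zs m k) ({1..} \<times> UNIV)"
    and distr_Zs: "\<And>m k. 1 \<le> m \<Longrightarrow> distr P borel (Zs m k) = \<nu>"
begin

lemma measurable_Zs: "1 \<le> i \<Longrightarrow> Zs i k \<in> measurable P \<nu>"
  using indep_Zs unfolding indep_vars_def2 measurable_cong_sets[OF refl sets_nu] by auto

lemma subalgebra_batch_sigma: "subalgebra P (batch_sigma P Zs m)"
proof -
  have "{Zs i k -` A \<inter> space P | i k A. 1 \<le> i \<and> i \<le> m \<and> A \<in> sets borel} \<subseteq> events"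
    using measurable_Zs sets_nu by (auto intro: measurable_sets)
  then show ?thesis
    unfolding subalgebra_def sets_batch_sigma by (simp add: sets.sigma_sets_subset)
qed

abbreviation batch :: "nat \<Rightarrow> nat \<Rightarrow> 'w \<Rightarrow> nat \<Rightarrow> 'x" where
  "batch n l \<omega> \<equiv> \<lambda>k\<in>{..<l}. Zs n k \<omega>"

lemma measurable_batch: "1 \<le> n \<Longrightarrow> batch n l \<in> measurable P (PiM {..<l} (\<lambda>_. \<nu>))"
  using measurable_Zs by (intro measurable_restrict) auto

lemma indep_batch_past:
  assumes mn: "m < n" and A: "A \<in> sets (batch_sigma P Zs m)" and Q: "Q \<in> sets (PiM {..<l} (\<lambda>_. \<nu>))"
  shows "prob (A \<inter> {\<omega>\<in>space P. batch n l \<omega> \<in> Q}) = prob A * prob {\<omega>\<in>space P. batch n l \<omega> \<in> Q}"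
proof -
  define E where "E i = {Zs (fst i) (snd i) -` B \<inter> space P | B. B \<in> sets (borel::'x measure)}" for i
  define I where "I = case_bool ({1..m} \<times> (UNIV::nat set)) ({n} \<times> UNIV)"
  have "indep_sets E ({1..} \<times> UNIV)"
    using indep_Zs unfolding indep_vars_def2 E_def by (simp add: case_prod_beta)
  then have "indep_sets E (\<Union>j. I j)"
    by (rule indep_sets_mono_index[rotated]) (use mn in \<open>auto simp: I_def split: bool.split_asm\<close>)
  moreover have "Int_stable (E i)" for i
    unfolding Int_stable_def E_def
  proof clarify
    fix B B' :: "'x set" assume "B \<in> sets borel" "B' \<in> sets borel"
    then show "\<exists>C. Zs (fst i) (snd i) -` B \<inter> space P \<inter> (Zs (fst i) (snd i) -` B' \<inter> space P)
        = Zs (fst i) (snd i) -` C \<inter> space P \<and> C \<in> sets borel"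
      by (intro exI[of _ "B \<inter> B'"]) auto
  qed
  moreover have "disjoint_family_on I UNIV"
    using mn unfolding disjoint_family_on_def I_def by (auto split: bool.split)
  ultimately have indep: "indep_sets (\<lambda>j. sigma_sets (space P) (\<Union>i\<in>I j. E i)) UNIV"
    by (rule indep_sets_collect_sigma)
  have "{Zs i k -` B \<inter> space P | i k B. 1 \<le> i \<and> i \<le> m \<and> B \<in> sets borel} = (\<Union>i\<in>I True. E i)"
  proof (intro equalityI subsetI)
    fix S assume "S \<in> {Zs i k -` B \<inter> space P | i k B. 1 \<le> i \<and> i \<le> m \<and> B \<in> sets borel}"
    then obtain i k B where "S = Zs i k -` B \<inter> space P" "1 \<le> i" "i \<le> m" "B \<in> sets borel" by blast
    then show "S \<in> (\<Union>i\<in>I True. E i)" unfolding I_def E_def by (intro UN_I[of "(i, k)"]) auto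
  qed (force simp: I_def E_def)
  then have past: "A \<in> sigma_sets (space P) (\<Union>i\<in>I True. E i)"
    using A unfolding sets_batch_sigma by simp
  define G where "G = (\<Union>i\<in>I False. E i)"
  have G: "G \<subseteq> Pow (space P)" unfolding G_def I_def E_def by auto
  have "Zs n k \<in> measurable (sigma (space P) G) \<nu>" for k
  proof (rule measurableI)
    fix B assume "B \<in> sets \<nu>"
    then have "Zs n k -` B \<inter> space P \<in> G" unfolding G_def I_def E_def sets_nu by force
    then show "Zs n k -` B \<inter> space (sigma (space P) G) \<in> sets (sigma (space P) G)" using G by auto
  qed (use sets_eq_imp_space_eq[OF sets_nu] in simp)
  then have "batch n l \<in> measurable (sigma (space P) G) (PiM {..<l} (\<lambda>_. \<nu>))"
    by (intro measurable_restrict) auto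
  from measurable_sets[OF this Q] G
  have future: "{\<omega>\<in>space P. batch n l \<omega> \<in> Q} \<in> sigma_sets (space P) (\<Union>i\<in>I False. E i)"
    unfolding G_def by (simp add: Collect_conj_eq Int_commute vimage_def)
  have "prob (\<Inter>j\<in>UNIV. case_bool A {\<omega>\<in>space P. batch n l \<omega> \<in> Q} j)
      = (\<Prod>j\<in>UNIV. prob (case_bool A {\<omega>\<in>space P. batch n l \<omega> \<in> Q} j))"
    by (rule indep_setsD[OF indep]) (use past future in \<open>auto split: bool.split\<close>)
  then show ?thesis by (simp add: UNIV_bool Int_commute)
qed

lemma distr_batch:
  assumes n: "1 \<le> n" and l: "1 \<le> l"
  shows "distr P (PiM {..<l} (\<lambda>_. \<nu>)) (batch n l) = PiM {..<l} (\<lambda>_. \<nu>)"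
proof -
  have "indep_sets (\<lambda>i. {(\<lambda>(m, k). Zs m k) i -` B \<inter> space P | B. B \<in> sets borel}) ({1..} \<times> UNIV)"
    using indep_Zs unfolding indep_vars_def2 by blast
  then have "indep_sets (\<lambda>i. {(\<lambda>(m, k). Zs m k) i -` B \<inter> space P | B. B \<in> sets borel}) (Pair n ` {..<l})"
    by (rule indep_sets_mono_index[rotated]) (use n in auto)
  from indep_sets_reindex[OF _ this]
  have "indep_sets (\<lambda>k. {Zs n k -` B \<inter> space P | B. B \<in> sets borel}) {..<l}"
    by (simp add: inj_on_def)
  then have "indep_vars (\<lambda>_. \<nu>) (\<lambda>k. Zs n k) {..<l}"
    using measurable_Zs n unfolding indep_vars_def2 sets_nu by auto
  moreover have "{..<l} \<noteq> {}" using l by (simp add: lessThan_empty_iff)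
  ultimately have "distr P (PiM {..<l} (\<lambda>_. \<nu>)) (batch n l) = PiM {..<l} (\<lambda>k. distr P \<nu> (Zs n k))"
    using indep_vars_iff_distr_eq_PiM[where I = "{..<l}" and M' = "\<lambda>_. \<nu>" and X = "\<lambda>k. Zs n k"] measurable_Zs n by auto
  also have "\<dots> = PiM {..<l} (\<lambda>_. \<nu>)"
    using distr_Zs[OF n] by (intro PiM_cong refl) (simp add: distr_cong[OF refl sets_nu])
  finally show ?thesis .
qed

lemma prob_batch_in:
  assumes "1 \<le> n" "1 \<le> l" "Q \<in> sets (PiM {..<l} (\<lambda>_. \<nu>))"
  shows "prob {\<omega>\<in>space P. batch n l \<omega> \<in> Q} = measure (PiM {..<l} (\<lambda>_. \<nu>)) Q"
  using measure_distr[OF measurable_batch[OF assms(1)] assms(3)] distr_batch[OF assms(1,2)]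
  by (simp add: vimage_def Collect_conj_eq Int_commute)

lemma W1_emp_batch_event:
  fixes t :: real
  assumes prob_nu: "prob_space \<nu>" and integrable_norm: "integrable \<nu> norm" and l: "1 \<le> l" and mn: "m < n"
  defines "E \<equiv> {\<omega> \<in> space P. t \<le> W1_emp \<nu> (\<lambda>k. Zs n k \<omega>) l}"
  shows "E \<in> events"
    and "\<And>A. A \<in> sets (batch_sigma P Zs m) \<Longrightarrow> prob (A \<inter> E) = prob A * prob E"
    and "prob E = measure (PiM {..<l} (\<lambda>_. \<nu>)) {zs \<in> space (PiM {..<l} (\<lambda>_. \<nu>)). t \<le> W1_emp \<nu> zs l}"
proof -
  let ?Q = "{zs \<in> space (PiM {..<l} (\<lambda>_. \<nu>)). t \<le> W1_emp \<nu> zs l}"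
  have n: "1 \<le> n" using mn by simp
  have Q: "?Q \<in> sets (PiM {..<l} (\<lambda>_. \<nu>))"
    using borel_measurable_W1_emp[OF prob_nu sets_nu integrable_norm l]
    unfolding borel_measurable_iff_ge by blast
  have "W1_emp \<nu> (batch n l \<omega>) l = W1_emp \<nu> (\<lambda>k. Zs n k \<omega>) l" for \<omega>
    by (rule W1_emp_cong) simp
  then have E: "E = {\<omega> \<in> space P. batch n l \<omega> \<in> ?Q}"
    unfolding E_def using measurable_space[OF measurable_batch[OF n]] by auto
  show "E \<in> events"
    unfolding E using measurable_sets[OF measurable_batch[OF n] Q] by (simp add: vimage_def Collect_conj_eq Int_commute)
  show "prob (A \<inter> E) = prob A * prob E" if "A \<in> sets (batch_sigma P Zs m)" for A
    unfolding E by (rule indep_batch_past[OF mn that Q])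
  show "prob E = measure (PiM {..<l} (\<lambda>_. \<nu>)) ?Q"
    unfolding E by (rule prob_batch_in[OF n l Q])
qed
end

section \<open>Conditional probabilities of deviation events\<close>

lemma (in finite_measure_subalgebra) real_cond_exp_indicator_indep:
  assumes E: "E \<in> sets M" and indep: "\<And>A. A \<in> sets F \<Longrightarrow> measure M (A \<inter> E) = measure M A * measure M E"
  shows "AE x in M. real_cond_exp M F (indicator E) x = measure M E"
proof (rule real_cond_exp_charact)
  fix A assume "A \<in> sets F"
  moreover from this have "A \<in> sets M" using subalg by (auto simp: subalgebra_def)
  ultimately show "(\<integral>x\<in>A. indicator E x \<partial>M) = (\<integral>x\<in>A. measure M E \<partial>M)"
    using E indep by (simp add: set_integral_const set_lebesgue_integral_def indicator_inter_arith[symmetric]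
        Int_absorb2 sets.sets_into_space)
qed (use E in \<open>auto simp: less_top[symmetric]\<close>)

lemma (in finite_measure_subalgebra) AE_real_cond_exp_indicator_le:
  assumes B: "B \<in> sets F" and E: "E \<in> sets M"
    and indep: "\<And>A. A \<in> sets F \<Longrightarrow> measure M (A \<inter> E) = measure M A * measure M E"
    and S: "S \<inter> B \<subseteq> E"
  shows "AE x in M. x \<in> B \<longrightarrow> real_cond_exp M F (indicator S) x \<le> measure M E"
proof (cases "(indicator S :: 'a \<Rightarrow> real) \<in> borel_measurable M")
  case False
  then have "(\<lambda>x. ennreal (indicator S x)) \<notin> borel_measurable M" by simp
  then have "real_cond_exp M F (indicator S) x \<le> 0" for x
    unfolding real_cond_exp_def nn_cond_exp_def by simp
  then show ?thesis using measure_nonneg[of M E] by (intro AE_I2) (meson order_trans)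
next
  case True
  have B_M: "B \<in> sets M" using B subalg by (auto simp: subalgebra_def)
  define T :: "'a \<Rightarrow> real" where "T x = indicator B x * indicator E x + indicator (space M - B) x" for x
  have int_S: "integrable M (indicator S :: 'a \<Rightarrow> real)"
    using True by (intro integrable_const_bound[where B = 1]) (auto split: split_indicator)
  have int_E: "integrable M (indicator E :: 'a \<Rightarrow> real)"
    using E by (intro integrable_real_indicator) (auto simp: less_top[symmetric])
  have "space M - B \<in> sets F" using sets.compl_sets[OF B] subalg by (simp add: subalgebra_def)
  then have B_F: "(indicator B :: 'a \<Rightarrow> real) \<in> borel_measurable F"
    and B'_F: "(indicator (space M - B) :: 'a \<Rightarrow> real) \<in> borel_measurable F"
    using B by auto
  have "AE x in M. real_cond_exp M F (indicator S) x \<le> real_cond_exp M F T x"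
    using S int_S B_M E unfolding T_def
    by (intro real_cond_exp_mono AE_I2 Bochner_Integration.integrable_add integrable_real_mult_indicator)
       (auto split: split_indicator intro: integrable_real_indicator simp: less_top[symmetric])
  moreover have "AE x in M. real_cond_exp M F T x
      = indicator B x * real_cond_exp M F (indicator E) x + indicator (space M - B) x"
  proof -
    have int_BE: "integrable M (\<lambda>x. indicator B x * indicator E x :: real)"
      using integrable_real_mult_indicator[OF B_M int_E] by (simp add: mult.commute)
    have int_B': "integrable M (indicator (space M - B) :: 'a \<Rightarrow> real)"
      using B_M by (intro integrable_real_indicator) (auto simp: less_top[symmetric])
    have "AE x in M. real_cond_exp M F T x = real_cond_exp M F (\<lambda>x. indicator B x * indicator E x) x
        + real_cond_exp M F (indicator (space M - B)) x"
      unfolding T_def using int_BE int_B' by (rule real_cond_exp_add)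
    moreover have "AE x in M. real_cond_exp M F (\<lambda>x. indicator B x * indicator E x) x
        = indicator B x * real_cond_exp M F (indicator E) x"
      using B_F E int_BE by (intro real_cond_exp_mult) auto
    moreover have "AE x in M. real_cond_exp M F (indicator (space M - B)) x = indicator (space M - B) x"
      using int_B' B'_F by (rule real_cond_exp_F_meas)
    ultimately show ?thesis by eventually_elim simp
  qed
  moreover have "AE x in M. real_cond_exp M F (indicator E) x = measure M E"
    using E indep by (rule real_cond_exp_indicator_indep)
  ultimately show ?thesis by eventually_elim (auto split: split_indicator)
qed

lemma (in finite_measure_subalgebra) AE_real_cond_exp_indicator_le_threshold:
  fixes N :: "'a \<Rightarrow> nat" and \<kappa> \<rho> :: "'a \<Rightarrow> real" and D :: "nat \<Rightarrow> 'a \<Rightarrow> real"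
  assumes [measurable]: "N \<in> measurable F (count_space UNIV)" "\<kappa> \<in> borel_measurable F" "\<rho> \<in> borel_measurable F"
    and \<kappa>_pos: "\<And>x. x \<in> space M \<Longrightarrow> 0 < \<kappa> x" and \<kappa>_less_\<rho>: "\<And>x. x \<in> space M \<Longrightarrow> \<kappa> x < \<rho> x"
    and D_sets: "\<And>k t. k \<in> N ` space M \<Longrightarrow> 0 < t \<Longrightarrow> {x \<in> space M. t \<le> D k x} \<in> sets M"
    and D_indep: "\<And>k t A. k \<in> N ` space M \<Longrightarrow> 0 < t \<Longrightarrow> A \<in> sets F \<Longrightarrow>
      measure M (A \<inter> {x \<in> space M. t \<le> D k x}) = measure M A * measure M {x \<in> space M. t \<le> D k x}"
    and D_tail: "\<And>k t. k \<in> N ` space M \<Longrightarrow> 0 < t \<Longrightarrow> measure M {x \<in> space M. t \<le> D k x} \<le> b k t"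
    and b_antimono: "\<And>k s t. 0 < s \<Longrightarrow> s \<le> t \<Longrightarrow> b k t \<le> b k s"
    and S: "\<And>x. x \<in> S \<Longrightarrow> x \<in> space M \<Longrightarrow> \<rho> x \<le> D (N x) x"
  shows "AE x in M. real_cond_exp M F (indicator S) x \<le> b (N x) (\<kappa> x)"
proof -
  \<comment> \<open>The gap \<open>\<kappa> < \<rho>\<close> leaves room for a rational threshold, so no continuity of \<open>b\<close> is needed.\<close>
  define B where "B k q = {x \<in> space M. N x = k \<and> \<kappa> x \<le> real_of_rat q \<and> real_of_rat q \<le> \<rho> x}" for k q
  have "AE x in M. x \<in> B k q \<longrightarrow> real_cond_exp M F (indicator S) x \<le> b k (real_of_rat q)" for k q
  proof (cases "B k q = {}")
    case False
    then obtain x where x: "x \<in> space M" "N x = k" "\<kappa> x \<le> real_of_rat q" unfolding B_def by blast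
    have k: "k \<in> N ` space M" using x by auto
    have q: "0 < real_of_rat q" using \<kappa>_pos[OF x(1)] x(3) by linarith
    have "B k q = {x \<in> space F. N x = k \<and> \<kappa> x \<le> real_of_rat q \<and> real_of_rat q \<le> \<rho> x}"
      unfolding B_def using subalg by (simp add: subalgebra_def)
    moreover have "Measurable.pred F (\<lambda>x. N x = k \<and> \<kappa> x \<le> real_of_rat q \<and> real_of_rat q \<le> \<rho> x)" by measurable
    ultimately have "B k q \<in> sets F" by (simp add: pred_def)
    moreover have "S \<inter> B k q \<subseteq> {x \<in> space M. real_of_rat q \<le> D k x}"
      unfolding B_def using S by fastforce
    ultimately have "AE x in M. x \<in> B k q \<longrightarrow>
        real_cond_exp M F (indicator S) x \<le> measure M {x \<in> space M. real_of_rat q \<le> D k x}"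
      using D_sets[OF k q] D_indep[OF k q] by (intro AE_real_cond_exp_indicator_le)
    then show ?thesis by (rule eventually_mono) (use D_tail[OF k q] in auto)
  qed simp
  then have "AE x in M. \<forall>kq :: nat \<times> rat. x \<in> B (fst kq) (snd kq) \<longrightarrow>
      real_cond_exp M F (indicator S) x \<le> b (fst kq) (real_of_rat (snd kq))"
    unfolding AE_all_countable by auto
  then show ?thesis
  proof (rule AE_mp[OF _ AE_I2], intro impI)
    fix x assume x: "x \<in> space M"
      and bound: "\<forall>kq :: nat \<times> rat. x \<in> B (fst kq) (snd kq) \<longrightarrow>
        real_cond_exp M F (indicator S) x \<le> b (fst kq) (real_of_rat (snd kq))"
    obtain q where q: "\<kappa> x < real_of_rat q" "real_of_rat q < \<rho> x"
      using of_rat_dense[OF \<kappa>_less_\<rho>[OF x]] by blast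
    then have "x \<in> B (N x) q" unfolding B_def using x by auto
    then have "real_cond_exp M F (indicator S) x \<le> b (N x) (real_of_rat q)"
      using bound[rule_format, of "(N x, q)"] by simp
    also have "\<dots> \<le> b (N x) (\<kappa> x)" using q \<kappa>_pos[OF x] by (intro b_antimono) auto
    finally show "real_cond_exp M F (indicator S) x \<le> b (N x) (\<kappa> x)" .
  qed
qed

section \<open>The concentration bound\<close>

context iid_batches
begin

lemma AE_cond_prob_SUP_cov_deviation_le:
  fixes U :: "'w \<Rightarrow> ('x \<Rightarrow> real) set" and N :: "'w \<Rightarrow> nat" and a b :: "'w \<Rightarrow> real"
  assumes prob_nu: "prob_space \<nu>" and integrable_norm: "integrable \<nu> norm"
    and tail: "\<And>k t. 1 \<le> k \<Longrightarrow> 0 < t \<Longrightarrow>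
      measure (PiM {..<k} (\<lambda>_. \<nu>)) {zs \<in> space (PiM {..<k} (\<lambda>_. \<nu>)). t \<le> W1_emp \<nu> zs k}
        \<le> C * exp (- c * real k * phi d \<alpha> t)"
    and rate: "1 \<le> d" "0 < \<alpha>" "0 \<le> c" "0 \<le> C"
    and n: "1 \<le> n"
    and N: "N \<in> measurable (batch_sigma P Zs (n - 1)) (count_space UNIV)" "\<And>\<omega>. \<omega> \<in> space P \<Longrightarrow> 1 \<le> N \<omega>"
    and ab: "a \<in> borel_measurable (batch_sigma P Zs (n - 1))" "b \<in> borel_measurable (batch_sigma P Zs (n - 1))"
      "\<And>\<omega>. \<omega> \<in> space P \<Longrightarrow> 0 < a \<omega> \<and> 0 < b \<omega>"
    and U: "\<And>\<omega>. \<omega> \<in> space P \<Longrightarrow> U \<omega> \<noteq> {}"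
      "\<And>\<omega> u. \<omega> \<in> space P \<Longrightarrow> u \<in> U \<omega> \<Longrightarrow> bounded_lipschitz u \<and> supnorm u \<le> a \<omega> \<and> lipconst u \<le> b \<omega>"
    and \<epsilon>: "0 < \<epsilon>"
  shows "AE \<omega> in P. real_cond_exp P (batch_sigma P Zs (n - 1))
      (indicator {\<omega>' \<in> space P. \<epsilon> \<le> (SUP gh\<in>U \<omega>' \<times> U \<omega>'.
        \<bar>cov_nu \<nu> (fst gh) (snd gh) - emp_cov (\<lambda>k. Zs n k \<omega>') (N \<omega>') (fst gh) (snd gh)\<bar>)}) \<omega>
    \<le> C * exp (- c * real (N \<omega>) * phi d \<alpha> (\<epsilon> / (6 * a \<omega> * b \<omega>)))"
proof -
  define F where "F = batch_sigma P Zs (n - 1)"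
  interpret F: finite_measure_subalgebra P F
    unfolding F_def by unfold_locales (rule subalgebra_batch_sigma)
  define \<kappa> where "\<kappa> \<omega> = \<epsilon> / (6 * a \<omega> * b \<omega>)" for \<omega>
  have \<kappa>_pos: "0 < \<kappa> \<omega>" if "\<omega> \<in> space P" for \<omega>
    using ab(3)[OF that] \<epsilon> unfolding \<kappa>_def by simp
  have \<kappa>_meas: "\<kappa> \<in> borel_measurable F"
    using ab(1,2) unfolding \<kappa>_def[abs_def] F_def
    by (intro borel_measurable_divide borel_measurable_times borel_measurable_const)
  \<comment> \<open>\<open>\<epsilon> / (4ab) = 3/2 \<kappa>\<close>: the slack between the constants 4 and 6 provides the gap \<open>\<kappa> < \<rho>\<close>.\<close>
  have deviation: "3 / 2 * \<kappa> \<omega> \<le> W1_emp \<nu> (\<lambda>k. Zs n k \<omega>) (N \<omega>)"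
    if "\<omega> \<in> space P" and "\<epsilon> \<le> (SUP gh\<in>U \<omega> \<times> U \<omega>.
      \<bar>cov_nu \<nu> (fst gh) (snd gh) - emp_cov (\<lambda>k. Zs n k \<omega>) (N \<omega>) (fst gh) (snd gh)\<bar>)" for \<omega>
  proof -
    note \<open>\<epsilon> \<le> _\<close>
    also have "(SUP gh\<in>U \<omega> \<times> U \<omega>.
        \<bar>cov_nu \<nu> (fst gh) (snd gh) - emp_cov (\<lambda>k. Zs n k \<omega>) (N \<omega>) (fst gh) (snd gh)\<bar>)
      \<le> 4 * a \<omega> * b \<omega> * W1_emp \<nu> (\<lambda>k. Zs n k \<omega>) (N \<omega>)"
      using that by (intro SUP_cov_deviation_le[OF prob_nu sets_nu integrable_norm] N(2) U) auto
    finally show ?thesis using ab(3)[OF that(1)] unfolding \<kappa>_def by (simp add: field_simps)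
  qed
  have "AE \<omega> in P. real_cond_exp P F (indicator {\<omega>' \<in> space P. \<epsilon> \<le> (SUP gh\<in>U \<omega>' \<times> U \<omega>'.
        \<bar>cov_nu \<nu> (fst gh) (snd gh) - emp_cov (\<lambda>k. Zs n k \<omega>') (N \<omega>') (fst gh) (snd gh)\<bar>)}) \<omega>
      \<le> C * exp (- c * real (N \<omega>) * phi d \<alpha> (\<kappa> \<omega>))"
  proof (intro F.AE_real_cond_exp_indicator_le_threshold[where \<rho> = "\<lambda>\<omega>. 3 / 2 * \<kappa> \<omega>"
        and D = "\<lambda>k \<omega>. W1_emp \<nu> (\<lambda>j. Zs n j \<omega>) k" and b = "\<lambda>k t. C * exp (- c * real k * phi d \<alpha> t)"])
    fix k :: nat and t :: real assume "k \<in> N ` space P" "0 < t"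
    then have "1 \<le> k" using N(2) by auto
    note event = W1_emp_batch_event[OF prob_nu integrable_norm this, where m = "n - 1" and n = n and t = t]
    show "{\<omega> \<in> space P. t \<le> W1_emp \<nu> (\<lambda>j. Zs n j \<omega>) k} \<in> events" using event(1) n by simp
    show "prob (A \<inter> {\<omega> \<in> space P. t \<le> W1_emp \<nu> (\<lambda>j. Zs n j \<omega>) k})
      = prob A * prob {\<omega> \<in> space P. t \<le> W1_emp \<nu> (\<lambda>j. Zs n j \<omega>) k}" if "A \<in> sets F" for A
      using event(2) that n unfolding F_def by simp
    show "prob {\<omega> \<in> space P. t \<le> W1_emp \<nu> (\<lambda>j. Zs n j \<omega>) k} \<le> C * exp (- c * real k * phi d \<alpha> t)"
      using event(3) tail[OF \<open>1 \<le> k\<close> \<open>0 < t\<close>] n by simp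
  next
    fix k :: nat and s t :: real assume "0 < s" "s \<le> t"
    then have "phi d \<alpha> s \<le> phi d \<alpha> t" using rate by (intro phi_mono) auto
    then show "C * exp (- c * real k * phi d \<alpha> t) \<le> C * exp (- c * real k * phi d \<alpha> s)"
      using rate by (simp add: mult_left_mono)
  qed (use N(1) \<kappa>_pos \<kappa>_meas deviation in \<open>auto simp: F_def\<close>)
  then show ?thesis unfolding \<kappa>_def F_def .
qed

end

theorem lemma4:
  fixes P :: "'w measure"
    and \<nu> :: "'x::euclidean_space measure"
    and Pset :: "'p::euclidean_space set"
    and f :: "'p \<Rightarrow> 'x \<Rightarrow> real"
    and Zs :: "nat \<Rightarrow> nat \<Rightarrow> 'w \<Rightarrow> 'x"
    and M :: "nat \<Rightarrow> 'w \<Rightarrow> nat"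
    and mu :: "nat \<Rightarrow> 'w \<Rightarrow> 'p"
    and \<alpha> \<beta> c C \<epsilon> :: real
    and n :: nat
  defines "g \<equiv> gmu \<nu> f"
  defines "gbar \<equiv> (\<lambda>m \<omega>. gram_schmidt (cov_nu \<nu>) (\<lambda>i. g (mu i \<omega>)) m)"
  defines "Kinf \<equiv> (SUP \<mu>\<in>Pset. supnorm (g \<mu>))"
  defines "KLip \<equiv> (SUP \<mu>\<in>Pset. lipconst (g \<mu>))"
  assumes P: "prob_space P"
    and nu_sets: "sets \<nu> = sets borel" and nu_prob: "prob_space \<nu>"
    \<comment> \<open>i.i.d. samples of law nu\<close>
    and Zs_indep: "prob_space.indep_vars P (\<lambda>_. borel) (\<lambda>(m, k). Zs m k) ({1..} \<times> UNIV)"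
    and Zs_law: "\<And>m k. m \<ge> 1 \<Longrightarrow> distr P borel (Zs m k) = \<nu>"
    \<comment> \<open>Assumption (A)\<close>
    and A_alpha: "\<alpha> > 1" and A_beta: "\<beta> > 0"
    and A_int: "integrable \<nu> (\<lambda>x. exp (\<beta> * norm x powr \<alpha>))"
    \<comment> \<open>Fournier--Guillin constants\<close>
    and c_pos: "c > 0" and C_pos: "C > 0"
    and FG: "\<And>(Mk::nat) \<kappa>. Mk \<ge> 1 \<Longrightarrow> \<kappa> > 0 \<Longrightarrow>
       measure (PiM {..<Mk} (\<lambda>_. \<nu>))
         {zs \<in> space (PiM {..<Mk} (\<lambda>_. \<nu>)).
            (SUP u \<in> {u. 1-lipschitz_on UNIV u}. \<bar>(\<integral>x. u x \<partial>\<nu>) - emp_mean zs Mk u\<bar>) \<ge> \<kappa>}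
       \<le> C * exp (- c * real Mk * phi DIM('x) \<alpha> \<kappa>)"
    \<comment> \<open>the parametrized functions\<close>
    and f_cont: "\<And>\<mu>. \<mu> \<in> Pset \<Longrightarrow> continuous_on UNIV (f \<mu>)"
    and f_L2: "\<And>\<mu>. \<mu> \<in> Pset \<Longrightarrow> integrable \<nu> (\<lambda>x. (f \<mu> x)\<^sup>2)"
    \<comment> \<open>Assumption (B)\<close>
    and B1: "l2_compact \<nu> (g ` Pset)" "bdd_above ((\<lambda>\<mu>. l2norm \<nu> (g \<mu>)) ` Pset)"
    and B2: "\<And>\<mu>. \<mu> \<in> Pset \<Longrightarrow> \<exists>L. L-lipschitz_on UNIV (g \<mu>)"
            "bdd_above ((\<lambda>\<mu>. lipconst (g \<mu>)) ` Pset)"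
    and B3: "\<And>\<mu>. \<mu> \<in> Pset \<Longrightarrow> bdd_above (range (\<lambda>x. \<bar>g \<mu> x\<bar>))"
            "bdd_above ((\<lambda>\<mu>. supnorm (g \<mu>)) ` Pset)"
    and B4: "\<And>k. kolmogorov_width \<nu> (g ` Pset) k > 0"
    \<comment> \<open>sample sizes\<close>
    and n2: "n \<ge> 2"
    and M_pos: "\<And>m \<omega>. 1 \<le> m \<Longrightarrow> m \<le> n \<Longrightarrow> \<omega> \<in> space P \<Longrightarrow> M m \<omega> \<ge> 1"
    and M_meas: "M n \<in> measurable (batch_sigma P Zs (n - 1)) (count_space UNIV)"
    \<comment> \<open>MC-greedy algorithm (steps 1, ..., n-1)\<close>
    and mu_in: "\<And>m \<omega>. 1 \<le> m \<Longrightarrow> m < n \<Longrightarrow> \<omega> \<in> space P \<Longrightarrow> mu m \<omega> \<in> Pset"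
    and mu_argmax: "\<And>m \<omega> \<mu>. 1 \<le> m \<Longrightarrow> m < n \<Longrightarrow> \<omega> \<in> space P \<Longrightarrow> \<mu> \<in> Pset \<Longrightarrow>
       greedy_obj \<nu> f (\<lambda>k. Zs m k \<omega>) (M m \<omega>) (\<lambda>i. mu i \<omega>) m \<mu>
         \<le> greedy_obj \<nu> f (\<lambda>k. Zs m k \<omega>) (M m \<omega>) (\<lambda>i. mu i \<omega>) m (mu m \<omega>)"
    and mu_indep: "\<And>m \<omega> lam. 1 \<le> m \<Longrightarrow> m < n \<Longrightarrow> \<omega> \<in> space P \<Longrightarrow>
       l2norm \<nu> (\<lambda>x. g (mu m \<omega>) x - (\<Sum>i\<in>{1..<m}. lam i * g (mu i \<omega>) x)) \<noteq> 0"
    and gbar_meas: "\<And>m x. 1 \<le> m \<Longrightarrow> m < n \<Longrightarrow>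
       (\<lambda>\<omega>. gbar m \<omega> x) \<in> borel_measurable (batch_sigma P Zs m)"
    and eps: "\<epsilon> > 0"
  shows "AE \<omega> in P.
     real_cond_exp P (batch_sigma P Zs (n - 1))
       (indicator {\<omega>' \<in> space P.
          (SUP gh \<in> (g ` Pset \<union> (\<lambda>m. gbar m \<omega>') ` {1..<n}) \<times> (g ` Pset \<union> (\<lambda>m. gbar m \<omega>') ` {1..<n}).
             \<bar>cov_nu \<nu> (fst gh) (snd gh) - emp_cov (\<lambda>k. Zs n k \<omega>') (M n \<omega>') (fst gh) (snd gh)\<bar>)
          \<ge> \<epsilon>}) \<omega>
     \<le> C * exp (- c * real (M n \<omega>) *
          phi DIM('x) \<alpha> (\<epsilon> / (6 * Max (insert Kinf ((\<lambda>m. supnorm (gbar m \<omega>)) ` {1..<n}))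
                               * Max (insert KLip ((\<lambda>m. lipconst (gbar m \<omega>)) ` {1..<n})))))"
proof -
  interpret iid_batches P \<nu> Zs
    using P nu_sets Zs_indep Zs_law by (intro iid_batches.intro iid_batches_axioms.intro)
  have integrable_norm: "integrable \<nu> norm"
    using A_alpha by (intro integrable_norm_of_exp_moment[OF nu_prob nu_sets _ A_beta A_int]) simp
  define fam where "fam \<omega> = g ` Pset \<union> (\<lambda>m. gbar m \<omega>) ` {1..<n}" for \<omega>
  define Ksup where "Ksup \<omega> = Max (insert Kinf ((\<lambda>m. supnorm (gbar m \<omega>)) ` {1..<n}))" for \<omega>
  define Klip where "Klip \<omega> = Max (insert KLip ((\<lambda>m. lipconst (gbar m \<omega>)) ` {1..<n}))" for \<omega>
  have g: "bounded_lipschitz (g \<mu>)" if "\<mu> \<in> Pset" for \<mu>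
    unfolding bounded_lipschitz_def using B3(1)[OF that] B2(1)[OF that] by (rule conjI)
  have family: "\<And>u. u \<in> fam \<omega> \<Longrightarrow> bounded_lipschitz u \<and> supnorm u \<le> Ksup \<omega> \<and> lipconst u \<le> Klip \<omega>"
    "fam \<omega> \<noteq> {}" "0 < Ksup \<omega>" "0 < Klip \<omega>" if \<omega>: "\<omega> \<in> space P" for \<omega>
  proof -
    have "l2norm \<nu> (g (mu 1 \<omega>)) \<noteq> 0" using mu_indep[OF _ _ \<omega>, of 1] n2 by simp
    note gram_schmidt_family_bounds[where mu = "\<lambda>i. mu i \<omega>" and ip = "cov_nu \<nu>",
        OF nu_prob g B3(2) B2(2) mu_in[OF _ _ \<omega>] n2 this]
    then show "\<And>u. u \<in> fam \<omega> \<Longrightarrow> bounded_lipschitz u \<and> supnorm u \<le> Ksup \<omega> \<and> lipconst u \<le> Klip \<omega>"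
      "fam \<omega> \<noteq> {}" "0 < Ksup \<omega>" "0 < Klip \<omega>"
      unfolding fam_def Ksup_def Klip_def gbar_def Kinf_def KLip_def by simp_all
  qed
  have gbar_meas_past: "(\<lambda>\<omega>. gbar m \<omega> x) \<in> borel_measurable (batch_sigma P Zs (n - 1))"
    if "m \<in> {1..<n}" for m x
    using that by (intro measurable_from_subalg[OF subalgebra_batch_sigma_mono gbar_meas]) auto
  have gbar_bl: "bounded_lipschitz (gbar m \<omega>)"
    if "m \<in> {1..<n}" "\<omega> \<in> space (batch_sigma P Zs (n - 1))" for m \<omega>
    using family(1)[of \<omega> "gbar m \<omega>"] that unfolding fam_def by simp
  have "finite {1..<n}" "{1..<n} \<noteq> {}" using n2 by simp_all
  note borel_measurable_Max_supnorm_lipconst[where h = gbar, OF this gbar_meas_past gbar_bl]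
  then have K_meas: "Ksup \<in> borel_measurable (batch_sigma P Zs (n - 1))"
    "Klip \<in> borel_measurable (batch_sigma P Zs (n - 1))"
    unfolding Ksup_def[abs_def] Klip_def[abs_def] by blast+
  have "AE \<omega> in P. real_cond_exp P (batch_sigma P Zs (n - 1))
      (indicator {\<omega>' \<in> space P. \<epsilon> \<le> (SUP gh\<in>fam \<omega>' \<times> fam \<omega>'.
        \<bar>cov_nu \<nu> (fst gh) (snd gh) - emp_cov (\<lambda>k. Zs n k \<omega>') (M n \<omega>') (fst gh) (snd gh)\<bar>)}) \<omega>
    \<le> C * exp (- c * real (M n \<omega>) * phi DIM('x) \<alpha> (\<epsilon> / (6 * Ksup \<omega> * Klip \<omega>)))"
  proof (rule AE_cond_prob_SUP_cov_deviation_le[OF nu_prob integrable_norm FG[folded W1_emp_def]])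
    show "1 \<le> DIM('x)" by (simp add: DIM_positive Suc_le_eq)
    show "1 \<le> M n \<omega>" if "\<omega> \<in> space P" for \<omega> using M_pos[OF _ _ that] n2 by simp
  qed (use A_alpha c_pos C_pos n2 M_meas K_meas family eps in simp_all)
  then show ?thesis unfolding fam_def Ksup_def Klip_def by simp
qed

end
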